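(* Let $S$ be the curve obtained from $\mathbb{P}^1$ by identifying the three points $0,1,\infty$ into a single (ordinary triple) point, and let $M_O$ be the moduli space of line bundles $L$ on $S$ whose pullback to $\mathbb{P}^1$ has degree $-1$. Identify $M_O$ with $(\mathbb{C}^* )^3/\mathbb{C}^*\subset\mathbb{P}^2=\bar M_O$, where (after fixing a trivialization over the triple point and viewing the pullback $\mathcal{O}(-1)$ as the tautological bundle) the three homogeneous coordinates record the gluing data of $L$ at the points $0,1,\infty$. Then the closure $Z\subset\bar M_O$ of the locus of those $L$ for which there exists a (unique) point $x$ with $L(x)\simeq\mathcal{O}_S$ is a quadric (conic) in $\mathbb{P}^2$ passing through the three coordinate points.
   Context: Here $L(x)$ denotes $L\otimes\mathcal{O}_S(x)$ for a smooth point $x$ of $S$. The identification $M_O\cong(\mathbb{C}^* )^3/\mathbb{C}^*$: a line bundle of degree $-1$ on $S$ is $\mathcal{O}_{\mathbb{P}^1}(-1)$ together with identifications of its fibers over $0,1,\infty$ with a common line; choosing these identifications amounts to choosing one nonzero vector on each of the three tautological lines over $0,1,\infty$, up to common scaling. *)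

theory Defs
  imports "HOL-Analysis.Analysis" "HOL-Computational_Algebra.Polynomial"
begin

(* Vectors of C^2; P^1 points are lines.  Affine coordinate t <-> [t:1], infinity <-> [1:0]. *)
type_synonym vec2 = "complex \<times> complex"
type_synonym vec3 = "complex \<times> complex \<times> complex"

definition smul2 :: "complex \<Rightarrow> vec2 \<Rightarrow> vec2" where
  "smul2 m v = (m * fst v, m * snd v)"

(* chosen basis vectors of the tautological lines of O(-1) over 0, 1, infinity *)
definition taut0 :: vec2 where "taut0 = (0, 1)"
definition taut1 :: vec2 where "taut1 = (1, 1)"
definition tautinf :: vec2 where "tautinf = (1, 0)"

(* smooth points of S: points of P^1 other than 0,1,infinity, i.e. t in C - {0,1} *)
definition smooth_pt :: "complex \<Rightarrow> bool" where
  "smooth_pt x \<longleftrightarrow> x \<noteq> 0 \<and> x \<noteq> 1"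

(* A rational section of the tautological bundle O(-1) on P^1, written in the affine chart
   as sigma(t) = (p(t)/q(t)) * (t,1), p,q coprime polynomials. *)
definition sec_val :: "complex poly \<Rightarrow> complex poly \<Rightarrow> complex \<Rightarrow> vec2" where
  "sec_val p q t = smul2 (poly p t / poly q t) (t, 1)"

(* its value at infinity (in the chart s = 1/t, sigma = t*(p/q) * (1,s)), valid when
   degree q = degree p + 1, i.e. when sigma is regular and nonvanishing at infinity *)
definition sec_val_inf :: "complex poly \<Rightarrow> complex poly \<Rightarrow> vec2" where
  "sec_val_inf p q = smul2 (lead_coeff p / lead_coeff q) tautinf"

(* sigma = (p/q)(t,1) has divisor exactly -[x] as a rational section of O(-1):
   i.e. it is a nowhere vanishing regular section of O(-1)(x) = O(-1) \<otimes> O(x). *)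
definition nv_section_twist :: "complex \<Rightarrow> complex poly \<Rightarrow> complex poly \<Rightarrow> bool" where
  "nv_section_twist x p q \<longleftrightarrow>
     q \<noteq> 0 \<and> coprime p q \<and> (\<forall>z. poly p z \<noteq> 0) \<and>
     (\<forall>z. poly q z = 0 \<longleftrightarrow> z = x) \<and> order x q = 1 \<and> degree q = degree p + 1"

(* The line bundle L with gluing data (a,b,c): the fibres of O(-1) over 0,1,infinity are
   identified with a common line by sending a*taut0, b*taut1, c*tautinf to the same vector.
   L(x) \<cong> O_S iff L(x) has a nowhere vanishing global section, i.e. a nowhere vanishing
   section of O(-1)(x) on P^1 whose values at 0,1,infinity are compatible with the gluing. *)
definition twist_trivial :: "vec3 \<Rightarrow> complex \<Rightarrow> bool" where
  "twist_trivial v x \<longleftrightarrow> (case v of (a, b, c) \<Rightarrow>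
     (\<exists>p q m. m \<noteq> 0 \<and> nv_section_twist x p q \<and>
        sec_val p q 0 = smul2 m (smul2 a taut0) \<and>
        sec_val p q 1 = smul2 m (smul2 b taut1) \<and>
        sec_val_inf p q = smul2 m (smul2 c tautinf)))"

(* M_O = (C-{0})^3 modulo scalars, represented by the cone of its representatives in C^3 - {0} *)
definition MO :: "vec3 set" where
  "MO = {(a, b, c). a \<noteq> 0 \<and> b \<noteq> 0 \<and> c \<noteq> 0}"

definition trivializable_locus :: "vec3 set" where
  "trivializable_locus = {v \<in> MO. \<exists>x. smooth_pt x \<and> twist_trivial v x}"

(* closure in P^2 of a cone of representatives: closure in C^3 - {0} *)
definition proj_closure :: "vec3 set \<Rightarrow> vec3 set" where
  "proj_closure A = closure A - {0}"

definition quad_form :: "(nat \<Rightarrow> complex) \<Rightarrow> vec3 \<Rightarrow> complex" where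
  "quad_form q v = (case v of (a, b, c) \<Rightarrow>
     q 0 * a^2 + q 1 * b^2 + q 2 * c^2 + q 3 * a * b + q 4 * b * c + q 5 * a * c)"

end

theory Submission
  imports Defs "HOL-Computational_Algebra.Fundamental_Theorem_Algebra"
begin

(* A nowhere vanishing section of O(-1)(x) has a constant numerator and a linear denominator
   vanishing at x, so up to scaling it is (t,1)/(t - x).  Its values at 0, 1, infinity are
   -1/x, 1/(1-x), 1 times the chosen basis vectors, so L(x) is trivial exactly when (a,b,c) is
   proportional to (-1/x, 1/(1-x), 1).  Then x = -c/a is unique, and eliminating x gives the
   conic ab + bc = ac, which has no square terms and so passes through the coordinate points.
   The conic is closed, and each of its points is a limit of points of the torus part along the
   rational parametrisation (t(s-t), st, s(t-s)). *)

lemma nv_section_twist_iff: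
  "nv_section_twist x p q \<longleftrightarrow>
     (\<exists>c k. c \<noteq> 0 \<and> k \<noteq> 0 \<and> p = [:c:] \<and> q = smult k [:-x, 1:])"
proof
  assume nv: "nv_section_twist x p q"
  have "constant (poly p)"
    using nv fundamental_theorem_of_algebra by (auto simp: nv_section_twist_def)
  then have "degree p = 0" by (simp add: constant_degree)
  then obtain c where p: "p = [:c:]" by (metis degree_eq_zeroE)
  have "c \<noteq> 0" using nv p by (auto simp: nv_section_twist_def)
  have "degree q = 1" using nv p by (simp add: nv_section_twist_def)
  then obtain k q0 where q: "q = [:q0, k:]" and "k \<noteq> 0" by (rule degree1_coeffs)
  have "poly q x = 0" using nv by (simp add: nv_section_twist_def)
  then have "q0 = - k * x" using q by (simp add: algebra_simps eq_neg_iff_add_eq_0)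
  then have "q = smult k [:-x, 1:]" using q by simp
  with p \<open>c \<noteq> 0\<close> \<open>k \<noteq> 0\<close>
  show "\<exists>c k. c \<noteq> 0 \<and> k \<noteq> 0 \<and> p = [:c:] \<and> q = smult k [:-x, 1:]" by blast
next
  assume "\<exists>c k. c \<noteq> 0 \<and> k \<noteq> 0 \<and> p = [:c:] \<and> q = smult k [:-x, 1:]"
  then obtain c k where "c \<noteq> 0" "k \<noteq> 0" and p: "p = [:c:]" and q: "q = smult k [:-x, 1:]"
    by blast
  have "coprime p q"
    using \<open>c \<noteq> 0\<close> p
    by (auto intro!: is_unit_left_imp_coprime simp: is_unit_const_poly_iff dvd_field_iff)
  moreover have "order x q = 1"
    using q order_smult[OF \<open>k \<noteq> 0\<close>, of x "[:-x, 1:]"] order_power_n_n[of x 1] by simp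
  ultimately show "nv_section_twist x p q"
    using \<open>c \<noteq> 0\<close> \<open>k \<noteq> 0\<close> p q by (auto simp: nv_section_twist_def)
qed

lemma twist_trivial_iff:
  assumes "smooth_pt x"
  shows "twist_trivial (a, b, c) x \<longleftrightarrow> c \<noteq> 0 \<and> a * x = - c \<and> b * (1 - x) = c"
proof -
  from assms have x: "x \<noteq> 0" "1 - x \<noteq> 0" by (auto simp: smooth_pt_def)
  show ?thesis
  proof
    assume "twist_trivial (a, b, c) x"
    then obtain d k m where "m \<noteq> 0" "d \<noteq> 0" "k \<noteq> 0"
      and "sec_val [:d:] (smult k [:-x, 1:]) 0 = smul2 m (smul2 a taut0)"
        "sec_val [:d:] (smult k [:-x, 1:]) 1 = smul2 m (smul2 b taut1)"
        "sec_val_inf [:d:] (smult k [:-x, 1:]) = smul2 m (smul2 c tautinf)"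
      by (auto simp: twist_trivial_def nv_section_twist_iff)
    then have a: "d / (k * - x) = m * a" and b: "d / (k * (1 - x)) = m * b" and c: "d / k = m * c"
      by (simp_all add: sec_val_def sec_val_inf_def smul2_def taut0_def taut1_def tautinf_def
          right_diff_distrib)
    have c': "c = d / (k * m)" using c \<open>m \<noteq> 0\<close> \<open>k \<noteq> 0\<close> by (simp add: field_simps)
    have "a = - c / x" using a x \<open>m \<noteq> 0\<close> \<open>k \<noteq> 0\<close> unfolding c' by (simp add: field_simps)
    moreover have "b = c / (1 - x)" using b x \<open>m \<noteq> 0\<close> \<open>k \<noteq> 0\<close> unfolding c'
      by (simp add: field_simps)
    ultimately show "c \<noteq> 0 \<and> a * x = - c \<and> b * (1 - x) = c"
      using x \<open>m \<noteq> 0\<close> \<open>d \<noteq> 0\<close> \<open>k \<noteq> 0\<close> c' by simp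
  next
    assume abc: "c \<noteq> 0 \<and> a * x = - c \<and> b * (1 - x) = c"
    then have "nv_section_twist x [:c:] [:-x, 1:]"
      unfolding nv_section_twist_iff by (intro exI[of _ c] exI[of _ 1]) simp
    moreover have "sec_val [:c:] [:-x, 1:] 0 = smul2 1 (smul2 a taut0)"
      "sec_val [:c:] [:-x, 1:] 1 = smul2 1 (smul2 b taut1)"
      "sec_val_inf [:c:] [:-x, 1:] = smul2 1 (smul2 c tautinf)"
      using abc x by (auto simp: sec_val_def sec_val_inf_def smul2_def taut0_def taut1_def
          tautinf_def field_simps)
    ultimately show "twist_trivial (a, b, c) x"
      unfolding twist_trivial_def prod.case using one_neq_zero by blast
  qed
qed

lemma twist_trivial_point:
  assumes "(a, b, c) \<in> MO" "smooth_pt x" "twist_trivial (a, b, c) x"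
  shows "x = - c / a"
  using assms by (auto simp: MO_def twist_trivial_iff field_simps)

definition conic :: "nat \<Rightarrow> complex" where
  "conic = (\<lambda>_. 0)(3 := 1, 4 := 1, 5 := -1)"

lemma quad_form_conic [simp]: "quad_form conic (a, b, c) = a * b + b * c - a * c"
  by (simp add: quad_form_def conic_def)

lemma trivializable_locus_eq: "trivializable_locus = {v \<in> MO. quad_form conic v = 0}"
proof (intro set_eqI iffI)
  fix v assume v: "v \<in> trivializable_locus"
  obtain a b c where abc: "v = (a, b, c)" by (cases v)
  obtain x where "smooth_pt x" "twist_trivial (a, b, c) x"
    using v abc by (auto simp: trivializable_locus_def)
  then have ax: "a * x = - c" and bx: "b * (1 - x) = c" by (simp_all add: twist_trivial_iff)
  have "a * c = a * (b * (1 - x))" using bx by simp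
  also have "\<dots> = a * b - b * (a * x)" by (simp add: algebra_simps)
  also have "\<dots> = a * b + b * c" using ax by simp
  finally have "a * c = a * b + b * c" .
  then show "v \<in> {v \<in> MO. quad_form conic v = 0}"
    using v abc by (simp add: trivializable_locus_def)
next
  fix v assume "v \<in> {v \<in> MO. quad_form conic v = 0}"
  then obtain a b c where v: "v = (a, b, c)" and "a \<noteq> 0" "b \<noteq> 0" "c \<noteq> 0"
    and conic: "a * b + b * c = a * c" by (auto simp: MO_def)
  define x where "x = - c / a"
  have "a + c \<noteq> 0"
  proof
    assume "a + c = 0"
    moreover have "b * (a + c) = a * c" using conic by (simp add: algebra_simps)
    ultimately have "a * c = 0" by simp
    then show False using \<open>a \<noteq> 0\<close> \<open>c \<noteq> 0\<close> by simp
  qed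
  then have "smooth_pt x"
    using \<open>a \<noteq> 0\<close> \<open>c \<noteq> 0\<close> by (auto simp: smooth_pt_def x_def field_simps add_eq_0_iff)
  moreover have "a * x = - c" "b * (1 - x) = c"
    using \<open>a \<noteq> 0\<close> conic by (auto simp: x_def field_simps)
  ultimately show "v \<in> trivializable_locus"
    using v \<open>a \<noteq> 0\<close> \<open>b \<noteq> 0\<close> \<open>c \<noteq> 0\<close>
    by (auto simp: trivializable_locus_def MO_def twist_trivial_iff)
qed

definition conic_point :: "complex \<Rightarrow> complex \<Rightarrow> complex \<Rightarrow> vec3" where
  "conic_point m s t = (m * t * (s - t), m * s * t, m * s * (t - s))"

lemma conic_parametrization:
  assumes "quad_form conic (a, b, c) = 0"
  shows "\<exists>m s t. (a, b, c) = conic_point m s t"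
proof (cases "a = b")
  case True
  then have "(a, b, c) = conic_point (- c) 1 0"
    using assms by (simp add: conic_point_def power2_eq_square[symmetric])
  then show ?thesis by blast
next
  case False
  then have "b - a \<noteq> 0" by simp
  moreover have "c = - (a * b) / (b - a)"
    using assms \<open>b - a \<noteq> 0\<close> by (simp add: field_simps)
  ultimately have "(a, b, c) = conic_point (1 / (b - a)) b (b - a)"
    by (simp add: conic_point_def)
  then show ?thesis by blast
qed

lemma conic_point_in_locus:
  assumes "m \<noteq> 0" "s \<noteq> 0" "t \<noteq> 0" "s \<noteq> t"
  shows "conic_point m s t \<in> trivializable_locus"
proof -
  have "quad_form conic (conic_point m s t) = 0"
    unfolding conic_point_def quad_form_conic by algebra
  then show ?thesis
    using assms by (simp add: trivializable_locus_eq MO_def conic_point_def)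
qed

lemma isCont_in_closure:
  assumes "isCont f z" "eventually (\<lambda>w. f w \<in> A) (at z)" "at z \<noteq> bot"
  shows "f z \<in> closure A"
proof (rule Lim_in_closed_set)
  show "eventually (\<lambda>w. f w \<in> closure A) (at z)"
    using assms(2) by (rule eventually_mono) (use closure_subset in blast)
qed (use assms in \<open>simp_all add: isCont_def\<close>)
lemma conic_point_in_closure:
  assumes "m \<noteq> 0"
  shows "conic_point m s t \<in> closure trivializable_locus"
proof -
  let ?f = "\<lambda>w. conic_point m (s + w) (t - w)"
  have "eventually (\<lambda>w. w \<noteq> - s \<and> w \<noteq> t \<and> w \<noteq> (t - s) / 2) (at 0)"
    by (intro eventually_conj eventually_neq_at_within)
  then have "eventually (\<lambda>w. ?f w \<in> trivializable_locus) (at 0)"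
  proof (rule eventually_mono)
    fix w :: complex assume "w \<noteq> - s \<and> w \<noteq> t \<and> w \<noteq> (t - s) / 2"
    then have "s + w \<noteq> 0" "t - w \<noteq> 0" "s + w \<noteq> t - w"
      by (auto simp: add_eq_0_iff field_simps)
    then show "?f w \<in> trivializable_locus" using assms by (simp add: conic_point_in_locus)
  qed
  moreover have "isCont ?f 0" by (simp add: conic_point_def)
  ultimately show ?thesis using isCont_in_closure[where f = ?f and z = 0] by simp
qed

lemma closed_quad_form_zeros: "closed {v. quad_form q v = 0}"
proof -
  have "quad_form q = (\<lambda>v. q 0 * (fst v)^2 + q 1 * (fst (snd v))^2 + q 2 * (snd (snd v))^2 +
      q 3 * fst v * fst (snd v) + q 4 * fst (snd v) * snd (snd v) + q 5 * fst v * snd (snd v))"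
    by (simp add: fun_eq_iff quad_form_def split: prod.split)
  then have "continuous_on UNIV (quad_form q)" by (simp add: continuous_intros)
  then show ?thesis by (simp add: closed_Collect_eq)
qed

lemma proj_closure_trivializable_locus:
  "proj_closure trivializable_locus = {v. v \<noteq> 0 \<and> quad_form conic v = 0}"
proof (intro set_eqI iffI)
  fix v assume "v \<in> proj_closure trivializable_locus"
  moreover have "closure trivializable_locus \<subseteq> {v. quad_form conic v = 0}"
    by (rule closure_minimal) (auto simp: trivializable_locus_eq closed_quad_form_zeros)
  ultimately show "v \<in> {v. v \<noteq> 0 \<and> quad_form conic v = 0}"
    unfolding proj_closure_def by blast
next
  fix v assume v: "v \<in> {v. v \<noteq> 0 \<and> quad_form conic v = 0}"
  obtain a b c where "v = (a, b, c)" by (cases v)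
  then obtain m s t where mst: "v = conic_point m s t"
    using v conic_parametrization by blast
  then have "m \<noteq> 0" using v by (auto simp: conic_point_def zero_prod_def)
  then show "v \<in> proj_closure trivializable_locus"
    using v mst conic_point_in_closure unfolding proj_closure_def by blast
qed

theorem mainTheorem3:
  shows "(\<forall>v \<in> trivializable_locus. \<exists>!x. smooth_pt x \<and> twist_trivial v x) \<and>
    (\<exists>q. (\<exists>i<6. q i \<noteq> 0) \<and>
       proj_closure trivializable_locus = {v. v \<noteq> 0 \<and> quad_form q v = 0} \<and>
       quad_form q (1, 0, 0) = 0 \<and> quad_form q (0, 1, 0) = 0 \<and> quad_form q (0, 0, 1) = 0)"
proof
  show "\<forall>v \<in> trivializable_locus. \<exists>!x. smooth_pt x \<and> twist_trivial v x"
  proof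
    fix v assume "v \<in> trivializable_locus"
    then obtain x where x: "smooth_pt x \<and> twist_trivial v x" and "v \<in> MO"
      by (auto simp: trivializable_locus_def)
    obtain a b c where v: "v = (a, b, c)" by (cases v)
    show "\<exists>!x. smooth_pt x \<and> twist_trivial v x"
    proof (rule ex1I[of _ x])
      fix y assume "smooth_pt y \<and> twist_trivial v y"
      then show "y = x" using x \<open>v \<in> MO\<close> twist_trivial_point unfolding v by metis
    qed (rule x)
  qed
  show "\<exists>q. (\<exists>i<6. q i \<noteq> 0) \<and>
       proj_closure trivializable_locus = {v. v \<noteq> 0 \<and> quad_form q v = 0} \<and>
       quad_form q (1, 0, 0) = 0 \<and> quad_form q (0, 1, 0) = 0 \<and> quad_form q (0, 0, 1) = 0"
  proof (intro exI[of _ conic] conjI)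
    show "\<exists>i<6. conic i \<noteq> 0" by (intro exI[of _ 3]) (simp add: conic_def)
  qed (simp_all add: proj_closure_trivializable_locus)
qed

end
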